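(* Let $E$ be a regular biordered set satisfying: (E1) there exists an element $0\in E$ such that $0\,\omega\,e$ for every $e\in E$; (E2) there exists a map $E\to E$, $e\mapsto e'$, such that for all $e,f\in E$: (i) $(e')'=e$; (ii) $f\,\omega^l\,e$ if and only if $e'\,\omega^r\,f'$; (iii) $f\,\omega^l\,e'$ if and only if $M(f,e)=\{0\}$. Then there exists a strongly regular Baer semigroup $S$ such that $E$ is (isomorphic to) the biordered set of idempotents of $S$.
   Context: For a semigroup $S$, its biordered set $E(S)$ is the set of idempotents of $S$ regarded as a partial algebra: for $e,f\in E(S)$ the product $ef$ (computed in $S$) is defined exactly when $\{ef,fe\}\cap\{e,f\}\neq\emptyset$. A semigroup is regular if for every $x$ there is $y$ with $xyx=x$. A regular biordered set is a partial algebra isomorphic to $E(S)$ for some regular semigroup $S$ (equivalently, a biordered set in Nambooripad's axiomatic sense satisfying the regularity axiom). In a biordered set $E$: $\omega^l=\{(e,f): ef=e\}$, $\omega^r=\{(e,f): fe=e\}$, $\omega=\omega^l\cap\omega^r$; $M(e,f)=\{g\in E: g\,\omega^l\,e \text{ and } g\,\omega^r\,f\}$. For a semigroup $S$ with zero $0$, the left annihilator of $s$ is $\{x\in S: xs=0\}$ and the right annihilator is $\{x\in S: sx=0\}$. $S$ is a strongly regular Baer semigroup if the set of left annihilators of elements of $S$ equals the set of principal left ideals of $S$, and the set of right annihilators of elements of $S$ equals the set of principal right ideals of $S$. *)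

theory Defs
  imports Main
begin

definition semigroup_on :: "'b set \<Rightarrow> ('b \<Rightarrow> 'b \<Rightarrow> 'b) \<Rightarrow> bool" where
  "semigroup_on S m \<longleftrightarrow>
     (\<forall>x\<in>S. \<forall>y\<in>S. m x y \<in> S) \<and>
     (\<forall>x\<in>S. \<forall>y\<in>S. \<forall>z\<in>S. m (m x y) z = m x (m y z))"

definition regular_semigroup_on :: "'b set \<Rightarrow> ('b \<Rightarrow> 'b \<Rightarrow> 'b) \<Rightarrow> bool" where
  "regular_semigroup_on S m \<longleftrightarrow>
     semigroup_on S m \<and> (\<forall>x\<in>S. \<exists>y\<in>S. m (m x y) x = x)"

definition idems :: "'b set \<Rightarrow> ('b \<Rightarrow> 'b \<Rightarrow> 'b) \<Rightarrow> 'b set" where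
  "idems S m = {e \<in> S. m e e = e}"

text \<open>The biordered set E(S) as a partial algebra: the partial product on idempotents,
  defined exactly when {ef, fe} meets {e, f}; None means undefined.\<close>
definition bos_prod :: "'b set \<Rightarrow> ('b \<Rightarrow> 'b \<Rightarrow> 'b) \<Rightarrow> 'b \<Rightarrow> 'b \<Rightarrow> 'b option" where
  "bos_prod S m e f =
     (if e \<in> idems S m \<and> f \<in> idems S m \<and> {m e f, m f e} \<inter> {e, f} \<noteq> {}
      then Some (m e f) else None)"

definition partial_algebra :: "'a set \<Rightarrow> ('a \<Rightarrow> 'a \<Rightarrow> 'a option) \<Rightarrow> bool" where
  "partial_algebra E p \<longleftrightarrow>
     (\<forall>e f g. p e f = Some g \<longrightarrow> e \<in> E \<and> f \<in> E \<and> g \<in> E)"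

definition iso_to_bos ::
  "'a set \<Rightarrow> ('a \<Rightarrow> 'a \<Rightarrow> 'a option) \<Rightarrow> 'b set \<Rightarrow> ('b \<Rightarrow> 'b \<Rightarrow> 'b) \<Rightarrow> ('a \<Rightarrow> 'b) \<Rightarrow> bool" where
  "iso_to_bos E p S m \<phi> \<longleftrightarrow>
     bij_betw \<phi> E (idems S m) \<and>
     (\<forall>e\<in>E. \<forall>f\<in>E. map_option \<phi> (p e f) = bos_prod S m (\<phi> e) (\<phi> f))"

definition is_bos_of_regular :: "'a set \<Rightarrow> ('a \<Rightarrow> 'a \<Rightarrow> 'a option) \<Rightarrow> 'b set \<Rightarrow> ('b \<Rightarrow> 'b \<Rightarrow> 'b) \<Rightarrow> bool" where
  "is_bos_of_regular E p S m \<longleftrightarrow>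
     partial_algebra E p \<and> regular_semigroup_on S m \<and> (\<exists>\<phi>. iso_to_bos E p S m \<phi>)"

definition omega_l :: "('a \<Rightarrow> 'a \<Rightarrow> 'a option) \<Rightarrow> 'a \<Rightarrow> 'a \<Rightarrow> bool" where
  "omega_l p e f \<longleftrightarrow> p e f = Some e"

definition omega_r :: "('a \<Rightarrow> 'a \<Rightarrow> 'a option) \<Rightarrow> 'a \<Rightarrow> 'a \<Rightarrow> bool" where
  "omega_r p e f \<longleftrightarrow> p f e = Some e"

definition omega :: "('a \<Rightarrow> 'a \<Rightarrow> 'a option) \<Rightarrow> 'a \<Rightarrow> 'a \<Rightarrow> bool" where
  "omega p e f \<longleftrightarrow> omega_l p e f \<and> omega_r p e f"

definition Mset :: "'a set \<Rightarrow> ('a \<Rightarrow> 'a \<Rightarrow> 'a option) \<Rightarrow> 'a \<Rightarrow> 'a \<Rightarrow> 'a set" where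
  "Mset E p e f = {g \<in> E. omega_l p g e \<and> omega_r p g f}"

definition is_zero :: "'b set \<Rightarrow> ('b \<Rightarrow> 'b \<Rightarrow> 'b) \<Rightarrow> 'b \<Rightarrow> bool" where
  "is_zero S m z \<longleftrightarrow> z \<in> S \<and> (\<forall>x\<in>S. m z x = z \<and> m x z = z)"

definition left_ann :: "'b set \<Rightarrow> ('b \<Rightarrow> 'b \<Rightarrow> 'b) \<Rightarrow> 'b \<Rightarrow> 'b \<Rightarrow> 'b set" where
  "left_ann S m z s = {x \<in> S. m x s = z}"

definition right_ann :: "'b set \<Rightarrow> ('b \<Rightarrow> 'b \<Rightarrow> 'b) \<Rightarrow> 'b \<Rightarrow> 'b \<Rightarrow> 'b set" where
  "right_ann S m z s = {x \<in> S. m s x = z}"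

definition princ_left :: "'b set \<Rightarrow> ('b \<Rightarrow> 'b \<Rightarrow> 'b) \<Rightarrow> 'b \<Rightarrow> 'b set" where
  "princ_left S m a = insert a {m x a | x. x \<in> S}"

definition princ_right :: "'b set \<Rightarrow> ('b \<Rightarrow> 'b \<Rightarrow> 'b) \<Rightarrow> 'b \<Rightarrow> 'b set" where
  "princ_right S m a = insert a {m a x | x. x \<in> S}"

definition strongly_regular_Baer :: "'b set \<Rightarrow> ('b \<Rightarrow> 'b \<Rightarrow> 'b) \<Rightarrow> bool" where
  "strongly_regular_Baer S m \<longleftrightarrow>
     semigroup_on S m \<and>
     (\<exists>z. is_zero S m z \<and>
        {left_ann S m z s | s. s \<in> S} = {princ_left S m a | a. a \<in> S} \<and>
        {right_ann S m z s | s. s \<in> S} = {princ_right S m a | a. a \<in> S})"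

end

(*
  Realise E as the idempotents of a regular semigroup S: then 0 is the least
  idempotent \<theta> and e \<mapsto> e' an involution c of E(S).  The only idempotent in the ideal
  J = S\<theta>S is \<theta>, and for idempotents e, f one has ef \<in> J iff M(e, f) = {\<theta>}, i.e. by
  (E2)(iii) iff ef' = e.  The Baer semigroup is S modulo the syntactic congruence of J
  (x ~ y iff uxv \<in> J \<longleftrightarrow> uyv \<in> J for all u, v), in which J collapses to the zero.  This
  congruence separates idempotents (ef ~ e gives e(ef)f' = eff' \<in> J, so ef' \<in> J and ef = e),
  and by Lallement's argument every idempotent class contains an idempotent, so the quotient
  has the same biordered set.  If sys = s then xs \<in> J iff x(sy)' = x, so the left annihilator
  of s is the principal left ideal generated by (sy)'; conversely S\<^sup>1a = S(ya) is the left
  annihilator of (ya)'.  By (E2)(ii) the hypotheses are left-right symmetric, so the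
  statements about right ideals follow in the opposite semigroup.
*)

theory Submission
  imports Defs
begin

lemma idems_flip: "idems S (\<lambda>x y. m y x) = idems S m"
  by (simp add: idems_def)

lemma princ_right_eq_princ_left_flip: "princ_right S m a = princ_left S (\<lambda>x y. m y x) a"
  by (simp add: princ_right_def princ_left_def)

lemma right_ann_eq_left_ann_flip: "right_ann S m z s = left_ann S (\<lambda>x y. m y x) z s"
  by (simp add: right_ann_def left_ann_def)

definition quot_mult :: "'b set \<Rightarrow> ('b \<Rightarrow> 'b \<Rightarrow> 'b) \<Rightarrow> ('b \<Rightarrow> 'c) \<Rightarrow> 'c \<Rightarrow> 'c \<Rightarrow> 'c" where
  "quot_mult S m cls A B = cls (m (SOME x. x \<in> S \<and> cls x = A) (SOME y. y \<in> S \<and> cls y = B))"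

lemma quot_mult_flip: "quot_mult S (\<lambda>x y. m y x) cls = (\<lambda>A B. quot_mult S m cls B A)"
  by (simp add: quot_mult_def fun_eq_iff)

locale semigroup_congruence_map =
  fixes S :: "'b set" and m :: "'b \<Rightarrow> 'b \<Rightarrow> 'b" and cls :: "'b \<Rightarrow> 'c"
  assumes semigroup: "semigroup_on S m"
    and cls_mult_left: "\<lbrakk>x \<in> S; y \<in> S; u \<in> S; cls x = cls y\<rbrakk> \<Longrightarrow> cls (m u x) = cls (m u y)"
    and cls_mult_right: "\<lbrakk>x \<in> S; y \<in> S; u \<in> S; cls x = cls y\<rbrakk> \<Longrightarrow> cls (m x u) = cls (m y u)"
begin

lemma closed: "x \<in> S \<Longrightarrow> y \<in> S \<Longrightarrow> m x y \<in> S"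
  using semigroup unfolding semigroup_on_def by blast

lemma assoc: "x \<in> S \<Longrightarrow> y \<in> S \<Longrightarrow> w \<in> S \<Longrightarrow> m (m x y) w = m x (m y w)"
  using semigroup unfolding semigroup_on_def by blast

lemma quot_mult_cls [simp]:
  assumes "x \<in> S" "y \<in> S"
  shows "quot_mult S m cls (cls x) (cls y) = cls (m x y)"
proof -
  define x' where "x' = (SOME x'. x' \<in> S \<and> cls x' = cls x)"
  define y' where "y' = (SOME y'. y' \<in> S \<and> cls y' = cls y)"
  have x': "x' \<in> S" "cls x' = cls x"
    using someI[of "\<lambda>x'. x' \<in> S \<and> cls x' = cls x" x] assms unfolding x'_def by auto
  have y': "y' \<in> S" "cls y' = cls y"
    using someI[of "\<lambda>y'. y' \<in> S \<and> cls y' = cls y" y] assms unfolding y'_def by auto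
  have "cls (m x' y') = cls (m x y')" using cls_mult_right x' y' assms by blast
  also have "\<dots> = cls (m x y)" using cls_mult_left y' assms by blast
  finally show ?thesis unfolding quot_mult_def x'_def y'_def .
qed

lemma quot_semigroup: "semigroup_on (cls ` S) (quot_mult S m cls)"
  unfolding semigroup_on_def by (simp add: closed assoc)

lemma quot_idems: "idems (cls ` S) (quot_mult S m cls) = cls ` {x \<in> S. cls (m x x) = cls x}"
  unfolding idems_def by force

lemma quot_princ_left:
  "a \<in> S \<Longrightarrow> princ_left (cls ` S) (quot_mult S m cls) (cls a) = cls ` princ_left S m a"
  unfolding princ_left_def by force

lemma quot_left_ann:
  "z \<in> S \<Longrightarrow> s \<in> S \<Longrightarrow>
   left_ann (cls ` S) (quot_mult S m cls) (cls z) (cls s) = cls ` {x \<in> S. cls (m x s) = cls z}"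
  unfolding left_ann_def by force

lemma quot_left_ann_eq_princ_left:
  assumes "z \<in> S" and "(\<lambda>s. {x \<in> S. cls (m x s) = cls z}) ` S = princ_left S m ` S"
  shows "left_ann (cls ` S) (quot_mult S m cls) (cls z) ` cls ` S
       = princ_left (cls ` S) (quot_mult S m cls) ` cls ` S"
proof -
  have "left_ann (cls ` S) (quot_mult S m cls) (cls z) ` cls ` S
      = (`) cls ` (\<lambda>s. {x \<in> S. cls (m x s) = cls z}) ` S"
    unfolding image_image using quot_left_ann[OF assms(1)] by (intro image_cong) simp_all
  also have "\<dots> = princ_left (cls ` S) (quot_mult S m cls) ` cls ` S"
    unfolding assms(2) image_image using quot_princ_left by (intro image_cong) simp_all
  finally show ?thesis .
qed

lemma opposite: "semigroup_congruence_map S (\<lambda>x y. m y x) cls"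
proof
  show "semigroup_on S (\<lambda>x y. m y x)"
    unfolding semigroup_on_def by (simp add: closed assoc)
qed (fact cls_mult_right cls_mult_left)+

lemma quot_right_ann_eq_princ_right:
  assumes "z \<in> S"
    and "(\<lambda>s. {x \<in> S. cls (m s x) = cls z}) ` S = princ_right S m ` S"
  shows "right_ann (cls ` S) (quot_mult S m cls) (cls z) ` cls ` S
       = princ_right (cls ` S) (quot_mult S m cls) ` cls ` S"
  using semigroup_congruence_map.quot_left_ann_eq_princ_left[OF opposite assms(1)] assms(2)
  unfolding right_ann_eq_left_ann_flip princ_right_eq_princ_left_flip quot_mult_flip[of S m cls, symmetric]
  by blast

end

lemma iso_to_bos_comp:
  assumes iso: "iso_to_bos E p S m \<phi>"
    and bij: "bij_betw \<psi> (idems S m) (idems T n)"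
    and hom: "\<And>e f. e \<in> idems S m \<Longrightarrow> f \<in> idems S m \<Longrightarrow>
      bos_prod T n (\<psi> e) (\<psi> f) = map_option \<psi> (bos_prod S m e f)"
  shows "iso_to_bos E p T n (\<psi> \<circ> \<phi>)"
proof -
  have \<phi>: "bij_betw \<phi> E (idems S m)"
    and \<phi>_hom: "\<And>\<alpha> \<beta>. \<alpha> \<in> E \<Longrightarrow> \<beta> \<in> E \<Longrightarrow> map_option \<phi> (p \<alpha> \<beta>) = bos_prod S m (\<phi> \<alpha>) (\<phi> \<beta>)"
    using iso unfolding iso_to_bos_def by blast+
  have "map_option (\<psi> \<circ> \<phi>) (p \<alpha> \<beta>) = bos_prod T n ((\<psi> \<circ> \<phi>) \<alpha>) ((\<psi> \<circ> \<phi>) \<beta>)"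
    if "\<alpha> \<in> E" "\<beta> \<in> E" for \<alpha> \<beta>
  proof -
    have "map_option (\<psi> \<circ> \<phi>) (p \<alpha> \<beta>) = map_option \<psi> (bos_prod S m (\<phi> \<alpha>) (\<phi> \<beta>))"
      unfolding option.map_comp[symmetric] \<phi>_hom[OF that] ..
    also have "\<dots> = bos_prod T n (\<psi> (\<phi> \<alpha>)) (\<psi> (\<phi> \<beta>))"
      using hom \<phi> that by (simp add: bij_betw_apply)
    finally show ?thesis
      by simp
  qed
  then show ?thesis
    unfolding iso_to_bos_def using bij_betw_trans[OF \<phi> bij] by blast
qed

locale regular_semigroup =
  fixes S :: "'a set" and mult :: "'a \<Rightarrow> 'a \<Rightarrow> 'a" (infixl "\<cdot>" 70)
  assumes regular: "regular_semigroup_on S (\<cdot>)"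
begin

abbreviation Idem :: "'a set" where "Idem \<equiv> idems S (\<cdot>)"

lemma mult_closed [simp]: "x \<in> S \<Longrightarrow> y \<in> S \<Longrightarrow> x \<cdot> y \<in> S"
  using regular unfolding regular_semigroup_on_def semigroup_on_def by blast

lemma mult_assoc [simp]: "x \<in> S \<Longrightarrow> y \<in> S \<Longrightarrow> w \<in> S \<Longrightarrow> x \<cdot> y \<cdot> w = x \<cdot> (y \<cdot> w)"
  using regular unfolding regular_semigroup_on_def semigroup_on_def by blast

lemma obtain_inverse:
  assumes "x \<in> S"
  obtains y where "y \<in> S" "x \<cdot> (y \<cdot> x) = x"
proof -
  from regular assms obtain y where "y \<in> S" "x \<cdot> y \<cdot> x = x"
    unfolding regular_semigroup_on_def by blast
  with that assms show thesis by simp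
qed

lemma Idem_in [simp]: "e \<in> Idem \<Longrightarrow> e \<in> S"
  by (simp add: idems_def)

lemma Idem_mult_self [simp]: "e \<in> Idem \<Longrightarrow> e \<cdot> e = e"
  unfolding idems_def by blast

lemma Idem_mult_self_left [simp]: "e \<in> Idem \<Longrightarrow> x \<in> S \<Longrightarrow> e \<cdot> (e \<cdot> x) = e \<cdot> x"
  by (simp flip: mult_assoc)

lemma IdemI: "e \<in> S \<Longrightarrow> e \<cdot> e = e \<Longrightarrow> e \<in> Idem"
  unfolding idems_def by blast

lemma inverse_left_Idem: "x \<in> S \<Longrightarrow> y \<in> S \<Longrightarrow> x \<cdot> (y \<cdot> x) = x \<Longrightarrow> y \<cdot> x \<in> Idem"
  by (intro IdemI) simp_all

lemma inverse_right_Idem: "x \<in> S \<Longrightarrow> y \<in> S \<Longrightarrow> x \<cdot> (y \<cdot> x) = x \<Longrightarrow> x \<cdot> y \<in> Idem"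
  by (intro IdemI) (simp_all flip: mult_assoc)

lemma Idem_opposite: "idems S (\<lambda>x y. y \<cdot> x) = Idem"
  by (rule idems_flip)

lemma inverse_mult_cancel:
  assumes "x \<in> S" "y \<in> S" "x \<cdot> (y \<cdot> x) = x" "w \<in> S"
  shows "x \<cdot> (y \<cdot> (x \<cdot> w)) = x \<cdot> w"
proof -
  have "x \<cdot> (y \<cdot> (x \<cdot> w)) = x \<cdot> (y \<cdot> x) \<cdot> w"
    using assms(1,2,4) by simp
  also have "\<dots> = x \<cdot> w"
    by (simp only: assms(3))
  finally show ?thesis .
qed

lemma princ_left_image: "princ_left S (\<cdot>) a = insert a ((\<lambda>u. u \<cdot> a) ` S)"
  unfolding princ_left_def by auto

lemma princ_left_Idem:
  assumes "e \<in> Idem"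
  shows "princ_left S (\<cdot>) e = {x \<in> S. x \<cdot> e = x}"
proof -
  have "u \<cdot> e \<cdot> e = u \<cdot> e" if "u \<in> S" for u
    using assms that by simp
  then show ?thesis
    unfolding princ_left_image using assms by force
qed

lemma princ_left_inverse:
  assumes "x \<in> S" "y \<in> S" "x \<cdot> (y \<cdot> x) = x"
  shows "princ_left S (\<cdot>) x = princ_left S (\<cdot>) (y \<cdot> x)"
proof -
  have "x \<in> (\<lambda>v. v \<cdot> (y \<cdot> x)) ` S"
    using assms by (intro image_eqI[of _ _ x]) simp_all
  moreover have "u \<cdot> x \<in> (\<lambda>v. v \<cdot> (y \<cdot> x)) ` S" if "u \<in> S" for u
    using assms that by (intro image_eqI[of _ _ "u \<cdot> x"]) simp_all
  moreover have "y \<cdot> x \<in> (\<lambda>v. v \<cdot> x) ` S"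
    using assms by (intro image_eqI[of _ _ y]) simp_all
  moreover have "u \<cdot> (y \<cdot> x) \<in> (\<lambda>v. v \<cdot> x) ` S" if "u \<in> S" for u
    using assms that by (intro image_eqI[of _ _ "u \<cdot> y"]) simp_all
  ultimately show ?thesis
    unfolding princ_left_image by blast
qed

lemma opposite_regular_semigroup: "regular_semigroup S (\<lambda>x y. y \<cdot> x)"
  unfolding regular_semigroup_def regular_semigroup_on_def semigroup_on_def
proof (intro conjI ballI)
  fix x assume "x \<in> S"
  then obtain y where "y \<in> S" "x \<cdot> (y \<cdot> x) = x"
    by (rule obtain_inverse)
  then show "\<exists>y\<in>S. x \<cdot> (y \<cdot> x) = x"
    by blast
qed simp_all

end

locale least_idempotent = regular_semigroup +
  fixes \<theta>
  assumes theta_Idem [simp]: "\<theta> \<in> Idem"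
    and theta_least: "e \<in> Idem \<Longrightarrow> \<theta> \<cdot> e = \<theta> \<and> e \<cdot> \<theta> = \<theta>"
begin

lemma theta_in [simp]: "\<theta> \<in> S"
  by simp

lemma theta_mult_Idem [simp]: "e \<in> Idem \<Longrightarrow> \<theta> \<cdot> e = \<theta>"
  and Idem_mult_theta [simp]: "e \<in> Idem \<Longrightarrow> e \<cdot> \<theta> = \<theta>"
  using theta_least by simp_all

lemma theta_mult_Idem_left [simp]: "e \<in> Idem \<Longrightarrow> x \<in> S \<Longrightarrow> \<theta> \<cdot> (e \<cdot> x) = \<theta> \<cdot> x"
  and Idem_mult_theta_left [simp]: "e \<in> Idem \<Longrightarrow> x \<in> S \<Longrightarrow> e \<cdot> (\<theta> \<cdot> x) = \<theta> \<cdot> x"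
  by (simp_all flip: mult_assoc)

definition theta_ideal where
  "theta_ideal = {u \<cdot> (\<theta> \<cdot> v) | u v. u \<in> S \<and> v \<in> S}"

lemma theta_idealI: "u \<in> S \<Longrightarrow> v \<in> S \<Longrightarrow> u \<cdot> (\<theta> \<cdot> v) \<in> theta_ideal"
  unfolding theta_ideal_def by blast

lemma theta_ideal_mult_left:
  assumes "x \<in> theta_ideal" "u \<in> S"
  shows "u \<cdot> x \<in> theta_ideal"
proof -
  obtain a b where "a \<in> S" "b \<in> S" "x = a \<cdot> (\<theta> \<cdot> b)"
    using assms(1) unfolding theta_ideal_def by blast
  then show ?thesis
    using theta_idealI[of "u \<cdot> a" b] assms(2) by simp
qed

lemma theta_ideal_mult_right:
  assumes "x \<in> theta_ideal" "u \<in> S"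
  shows "x \<cdot> u \<in> theta_ideal"
proof -
  obtain a b where "a \<in> S" "b \<in> S" "x = a \<cdot> (\<theta> \<cdot> b)"
    using assms(1) unfolding theta_ideal_def by blast
  then show ?thesis
    using theta_idealI[of a "b \<cdot> u"] assms(2) by simp
qed

lemma Idem_in_theta_ideal:
  assumes "g \<in> Idem" "g \<in> theta_ideal"
  shows "g = \<theta>"
proof -
  obtain u v where uv: "u \<in> S" "v \<in> S" and g: "g = u \<cdot> (\<theta> \<cdot> v)"
    using assms(2) unfolding theta_ideal_def by blast
  have g_mult: "u \<cdot> (\<theta> \<cdot> (v \<cdot> w)) = g \<cdot> w" if "w \<in> S" for w
    using g uv that by simp
  \<comment> \<open>\<open>h = y\<theta>x\<close> is an idempotent with \<open>\<theta>h = h\<close>, so \<open>h = \<theta>\<close>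
    and \<open>g = x\<theta>y = xhy = g\<theta>g = \<theta>\<close>\<close>
  define x where "x = g \<cdot> (u \<cdot> \<theta>)"
  define y where "y = \<theta> \<cdot> (v \<cdot> g)"
  have S: "x \<in> S" "y \<in> S"
    unfolding x_def y_def using assms(1) uv by simp_all
  have xy: "x \<cdot> y = g"
    unfolding x_def y_def using assms(1) uv by (simp add: g_mult)
  then have xy_mult: "x \<cdot> (y \<cdot> w) = g \<cdot> w" if "w \<in> S" for w
    using S that by (simp flip: xy)
  have theta_y: "\<theta> \<cdot> y = y"
    unfolding y_def using assms(1) uv by simp
  define h where "h = y \<cdot> (\<theta> \<cdot> x)"
  have "h \<in> Idem"
    unfolding h_def using S assms(1) by (intro IdemI) (simp_all add: xy_mult)
  moreover have "\<theta> \<cdot> h = (\<theta> \<cdot> y) \<cdot> (\<theta> \<cdot> x)"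
    unfolding h_def using S by simp
  then have "\<theta> \<cdot> h = h"
    unfolding h_def theta_y .
  ultimately have h: "h = \<theta>"
    by simp
  have "g = x \<cdot> (\<theta> \<cdot> y)"
    using xy theta_y by simp
  also have "\<dots> = x \<cdot> (h \<cdot> y)"
    by (simp add: h)
  also have "\<dots> = g \<cdot> (\<theta> \<cdot> g)"
    unfolding h_def using S assms(1) by (simp add: xy xy_mult)
  also have "\<dots> = \<theta>"
    using assms(1) by simp
  finally show ?thesis .
qed

lemma mult_Idem_in_theta_ideal_iff_M:
  assumes e: "e \<in> Idem" and f: "f \<in> Idem"
  shows "e \<cdot> f \<in> theta_ideal \<longleftrightarrow> (\<forall>g\<in>Idem. g \<cdot> e = g \<and> f \<cdot> g = g \<longrightarrow> g = \<theta>)"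
proof
  assume ef: "e \<cdot> f \<in> theta_ideal"
  show "\<forall>g\<in>Idem. g \<cdot> e = g \<and> f \<cdot> g = g \<longrightarrow> g = \<theta>"
  proof (intro ballI impI)
    fix g assume g: "g \<in> Idem" "g \<cdot> e = g \<and> f \<cdot> g = g"
    have "g \<cdot> (e \<cdot> f) \<cdot> g = (g \<cdot> e) \<cdot> (f \<cdot> g)"
      using g(1) e f by simp
    also have "\<dots> = g"
      using g by (simp only: Idem_mult_self)
    finally have "g \<in> theta_ideal"
      using ef g by (metis Idem_in theta_ideal_mult_left theta_ideal_mult_right)
    then show "g = \<theta>"
      using g Idem_in_theta_ideal by blast
  qed
next
  assume M: "\<forall>g\<in>Idem. g \<cdot> e = g \<and> f \<cdot> g = g \<longrightarrow> g = \<theta>"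
  obtain y where y: "y \<in> S" "e \<cdot> f \<cdot> (y \<cdot> (e \<cdot> f)) = e \<cdot> f"
    using obtain_inverse[of "e \<cdot> f"] e f by auto
  have inv: "e \<cdot> (f \<cdot> (y \<cdot> (e \<cdot> (f \<cdot> t)))) = e \<cdot> (f \<cdot> t)" if "t \<in> S" for t
    using inverse_mult_cancel[of "e \<cdot> f" y t] y e f that by simp
  \<comment> \<open>\<open>g = fwe\<close> with \<open>w = yefy\<close> an inverse of \<open>ef\<close> lies in \<open>M(e, f)\<close>\<close>
  define g where "g = f \<cdot> (y \<cdot> (e \<cdot> (f \<cdot> (y \<cdot> e))))"
  have "g \<in> Idem"
    unfolding g_def using e f y by (intro IdemI) (simp_all add: inv)
  moreover have "g \<cdot> e = g" "f \<cdot> g = g"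
    unfolding g_def using e f y by simp_all
  ultimately have "g = \<theta>"
    using M by blast
  moreover have "e \<cdot> f = e \<cdot> (g \<cdot> f)"
    unfolding g_def using e f y by (simp add: inv)
  ultimately have "e \<cdot> f = e \<cdot> (\<theta> \<cdot> f)"
    by (simp only:)
  then show "e \<cdot> f \<in> theta_ideal"
    using theta_idealI[of e f] e f by (simp only: Idem_in)
qed

lemma theta_ideal_mult_inverse_left:
  assumes "x \<in> S" "y \<in> S" "x \<cdot> (y \<cdot> x) = x" "w \<in> S"
  shows "x \<cdot> w \<in> theta_ideal \<longleftrightarrow> y \<cdot> (x \<cdot> w) \<in> theta_ideal"
proof
  show "y \<cdot> (x \<cdot> w) \<in> theta_ideal" if "x \<cdot> w \<in> theta_ideal"
    using theta_ideal_mult_left[OF that] assms by simp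
  show "x \<cdot> w \<in> theta_ideal" if "y \<cdot> (x \<cdot> w) \<in> theta_ideal"
    using theta_ideal_mult_left[OF that, of x] assms by (simp add: inverse_mult_cancel)
qed

lemma theta_ideal_mult_inverse_right:
  assumes "x \<in> S" "y \<in> S" "x \<cdot> (y \<cdot> x) = x" "w \<in> S"
  shows "w \<cdot> x \<in> theta_ideal \<longleftrightarrow> w \<cdot> (x \<cdot> y) \<in> theta_ideal"
proof
  show "w \<cdot> (x \<cdot> y) \<in> theta_ideal" if "w \<cdot> x \<in> theta_ideal"
    using theta_ideal_mult_right[OF that, of y] assms by simp
  show "w \<cdot> x \<in> theta_ideal" if "w \<cdot> (x \<cdot> y) \<in> theta_ideal"
    using theta_ideal_mult_right[OF that, of x] assms by simp
qed

definition theta_cong :: "'a \<Rightarrow> 'a \<Rightarrow> bool" where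
  "theta_cong x y \<longleftrightarrow>
     (\<forall>u\<in>S. \<forall>v\<in>S. u \<cdot> (x \<cdot> v) \<in> theta_ideal \<longleftrightarrow> u \<cdot> (y \<cdot> v) \<in> theta_ideal)"

lemma theta_cong_refl [simp]: "theta_cong x x"
  unfolding theta_cong_def by blast

lemma theta_cong_sym: "theta_cong x y \<Longrightarrow> theta_cong y x"
  unfolding theta_cong_def by blast

lemma theta_cong_trans [trans]: "theta_cong x y \<Longrightarrow> theta_cong y z \<Longrightarrow> theta_cong x z"
  unfolding theta_cong_def by blast

lemma theta_cong_mult_left:
  assumes "theta_cong x y" "x \<in> S" "y \<in> S" "w \<in> S"
  shows "theta_cong (w \<cdot> x) (w \<cdot> y)"
  using assms unfolding theta_cong_def by (metis mult_assoc mult_closed)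

lemma theta_cong_mult_right:
  assumes "theta_cong x y" "x \<in> S" "y \<in> S" "w \<in> S"
  shows "theta_cong (x \<cdot> w) (y \<cdot> w)"
  using assms unfolding theta_cong_def by (metis mult_assoc mult_closed)

lemma theta_cong_iff_Idem_sandwich:
  assumes "x \<in> S" "y \<in> S"
  shows "theta_cong x y \<longleftrightarrow>
    (\<forall>e\<in>Idem. \<forall>f\<in>Idem. e \<cdot> (x \<cdot> f) \<in> theta_ideal \<longleftrightarrow> e \<cdot> (y \<cdot> f) \<in> theta_ideal)"
proof
  assume "theta_cong x y"
  then show "\<forall>e\<in>Idem. \<forall>f\<in>Idem. e \<cdot> (x \<cdot> f) \<in> theta_ideal \<longleftrightarrow> e \<cdot> (y \<cdot> f) \<in> theta_ideal"
    unfolding theta_cong_def by simp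
next
  assume sandwich: "\<forall>e\<in>Idem. \<forall>f\<in>Idem. e \<cdot> (x \<cdot> f) \<in> theta_ideal \<longleftrightarrow> e \<cdot> (y \<cdot> f) \<in> theta_ideal"
  show "theta_cong x y"
    unfolding theta_cong_def
  proof (intro ballI)
    fix u v assume uv: "u \<in> S" "v \<in> S"
    obtain a where a: "a \<in> S" "u \<cdot> (a \<cdot> u) = u"
      using obtain_inverse uv(1) by blast
    obtain b where b: "b \<in> S" "v \<cdot> (b \<cdot> v) = v"
      using obtain_inverse uv(2) by blast
    have reduce: "u \<cdot> (t \<cdot> v) \<in> theta_ideal \<longleftrightarrow> (a \<cdot> u) \<cdot> (t \<cdot> (v \<cdot> b)) \<in> theta_ideal"
      if "t \<in> S" for t
      using theta_ideal_mult_inverse_left[OF uv(1) a, of "t \<cdot> v"]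
        theta_ideal_mult_inverse_right[OF uv(2) b, of "a \<cdot> (u \<cdot> t)"] uv a b that
      by simp
    have "a \<cdot> u \<in> Idem" "v \<cdot> b \<in> Idem"
      using uv a b inverse_left_Idem inverse_right_Idem by blast+
    then show "u \<cdot> (x \<cdot> v) \<in> theta_ideal \<longleftrightarrow> u \<cdot> (y \<cdot> v) \<in> theta_ideal"
      using reduce[of x] reduce[of y] sandwich assms by simp
  qed
qed

lemma Idem_sandwich_eq_iff:
  assumes \<phi>: "\<phi> ` E = Idem" and "x \<in> S" "y \<in> S"
  shows "{(\<alpha>, \<beta>) \<in> E \<times> E. \<phi> \<alpha> \<cdot> (x \<cdot> \<phi> \<beta>) \<in> theta_ideal}
       = {(\<alpha>, \<beta>) \<in> E \<times> E. \<phi> \<alpha> \<cdot> (y \<cdot> \<phi> \<beta>) \<in> theta_ideal}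
     \<longleftrightarrow> theta_cong x y"
proof -
  have "{(\<alpha>, \<beta>) \<in> E \<times> E. \<phi> \<alpha> \<cdot> (x \<cdot> \<phi> \<beta>) \<in> theta_ideal}
       = {(\<alpha>, \<beta>) \<in> E \<times> E. \<phi> \<alpha> \<cdot> (y \<cdot> \<phi> \<beta>) \<in> theta_ideal}
     \<longleftrightarrow> (\<forall>\<alpha>\<in>E. \<forall>\<beta>\<in>E.
          \<phi> \<alpha> \<cdot> (x \<cdot> \<phi> \<beta>) \<in> theta_ideal \<longleftrightarrow> \<phi> \<alpha> \<cdot> (y \<cdot> \<phi> \<beta>) \<in> theta_ideal)"
    by (auto simp: set_eq_iff)
  also have "\<dots> \<longleftrightarrow> (\<forall>e\<in>Idem. \<forall>f\<in>Idem. e \<cdot> (x \<cdot> f) \<in> theta_ideal \<longleftrightarrow> e \<cdot> (y \<cdot> f) \<in> theta_ideal)"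
    unfolding \<phi>[symmetric] by simp
  also have "\<dots> \<longleftrightarrow> theta_cong x y"
    using theta_cong_iff_Idem_sandwich assms(2,3) by simp
  finally show ?thesis .
qed

lemma theta_cong_theta_iff:
  assumes "x \<in> S"
  shows "theta_cong x \<theta> \<longleftrightarrow> x \<in> theta_ideal"
proof
  assume "theta_cong x \<theta>"
  obtain y where y: "y \<in> S" "x \<cdot> (y \<cdot> x) = x"
    using obtain_inverse assms by blast
  have "u \<cdot> (x \<cdot> v) \<in> theta_ideal \<longleftrightarrow> u \<cdot> (\<theta> \<cdot> v) \<in> theta_ideal" if "u \<in> S" "v \<in> S" for u v
    using \<open>theta_cong x \<theta>\<close> that unfolding theta_cong_def by blast
  from this[of "x \<cdot> y" "y \<cdot> x"] show "x \<in> theta_ideal"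
    using theta_idealI[of "x \<cdot> y" "y \<cdot> x"] assms y by simp
next
  assume "x \<in> theta_ideal"
  then show "theta_cong x \<theta>"
    unfolding theta_cong_def
    by (metis theta_idealI theta_ideal_mult_left theta_ideal_mult_right)
qed

lemma theta_cong_square_imp_Idem:
  assumes x: "x \<in> S" and sq: "theta_cong (x \<cdot> x) x"
  shows "\<exists>e\<in>Idem. theta_cong e x"
proof -
  obtain y where y: "y \<in> S" "x \<cdot> x \<cdot> (y \<cdot> (x \<cdot> x)) = x \<cdot> x"
    using obtain_inverse[of "x \<cdot> x"] x by auto
  have cancel: "x \<cdot> (x \<cdot> (y \<cdot> (x \<cdot> (x \<cdot> v)))) = x \<cdot> (x \<cdot> v)" if "v \<in> S" for v
    using inverse_mult_cancel[OF _ y(1,2) that] x y(1) that by simp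
  \<comment> \<open>Lallement: with \<open>w\<close> an inverse of \<open>xx\<close>, \<open>xwx\<close> is idempotent and \<open>xwx ~ xxwxx = xx ~ x\<close>\<close>
  define w where "w = y \<cdot> (x \<cdot> (x \<cdot> y))"
  have w: "w \<in> S"
    unfolding w_def using x y by simp
  define e where "e = x \<cdot> (w \<cdot> x)"
  have "e \<in> Idem"
    unfolding e_def w_def using x y by (intro IdemI) (simp_all add: cancel)
  moreover have "theta_cong e x"
  proof -
    have "theta_cong e (x \<cdot> x \<cdot> (w \<cdot> x))"
      unfolding e_def using theta_cong_mult_right[OF theta_cong_sym[OF sq]] x w by simp
    also have "theta_cong \<dots> (x \<cdot> x \<cdot> w \<cdot> (x \<cdot> x))"
      using theta_cong_mult_left[OF theta_cong_sym[OF sq], of "x \<cdot> x \<cdot> w"] x w by simp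
    also have "x \<cdot> x \<cdot> w \<cdot> (x \<cdot> x) = x \<cdot> x"
      unfolding w_def using x y by (simp add: cancel)
    also have "theta_cong (x \<cdot> x) x"
      by (fact sq)
    finally show ?thesis .
  qed
  ultimately show ?thesis
    by blast
qed

lemma opposite_least_idempotent: "least_idempotent S (\<lambda>x y. y \<cdot> x) \<theta>"
  using opposite_regular_semigroup theta_Idem theta_least
  unfolding least_idempotent_def least_idempotent_axioms_def Idem_opposite by blast

lemma theta_ideal_opposite: "least_idempotent.theta_ideal S (\<lambda>x y. y \<cdot> x) \<theta> = theta_ideal"
proof (rule set_eqI)
  fix x
  show "x \<in> least_idempotent.theta_ideal S (\<lambda>x y. y \<cdot> x) \<theta> \<longleftrightarrow> x \<in> theta_ideal"
    unfolding least_idempotent.theta_ideal_def[OF opposite_least_idempotent]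
  proof
    assume "x \<in> {v \<cdot> \<theta> \<cdot> u | u v. u \<in> S \<and> v \<in> S}"
    then obtain u v where "u \<in> S" "v \<in> S" "x = v \<cdot> \<theta> \<cdot> u"
      by blast
    then show "x \<in> theta_ideal"
      using theta_idealI[of v u] by simp
  next
    assume "x \<in> theta_ideal"
    then obtain u v where "u \<in> S" "v \<in> S" "x = u \<cdot> (\<theta> \<cdot> v)"
      unfolding theta_ideal_def by blast
    then show "x \<in> {v \<cdot> \<theta> \<cdot> u | u v. u \<in> S \<and> v \<in> S}"
      by (intro CollectI exI[of _ v] exI[of _ u]) simp
  qed
qed

lemma theta_cong_opposite:
  assumes "x \<in> S" "y \<in> S"
  shows "least_idempotent.theta_cong S (\<lambda>x y. y \<cdot> x) \<theta> x y \<longleftrightarrow> theta_cong x y"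
  unfolding least_idempotent.theta_cong_def[OF opposite_least_idempotent]
    theta_ideal_opposite theta_cong_def
  using assms by auto

end

(* (E1) and (E2) transported to E(S); in (iii) the condition M(f, e) = {\<theta>} is spelled out,
   \<theta> always lying in M(f, e). *)
locale regular_semigroup_with_complement = least_idempotent +
  fixes c
  assumes c_Idem [simp]: "e \<in> Idem \<Longrightarrow> c e \<in> Idem"
    and c_c [simp]: "e \<in> Idem \<Longrightarrow> c (c e) = e"
    and c_reverses_order: "e \<in> Idem \<Longrightarrow> f \<in> Idem \<Longrightarrow> f \<cdot> e = f \<longleftrightarrow> c f \<cdot> c e = c e"
    and c_orthogonal:
      "e \<in> Idem \<Longrightarrow> f \<in> Idem \<Longrightarrow> f \<cdot> c e = f \<longleftrightarrow> (\<forall>g\<in>Idem. g \<cdot> f = g \<and> e \<cdot> g = g \<longrightarrow> g = \<theta>)"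
begin

lemma opposite_complement: "regular_semigroup_with_complement S (\<lambda>x y. y \<cdot> x) \<theta> c"
proof (intro regular_semigroup_with_complement.intro regular_semigroup_with_complement_axioms.intro,
    unfold Idem_opposite)
  show "least_idempotent S (\<lambda>x y. y \<cdot> x) \<theta>"
    by (fact opposite_least_idempotent)
  fix e f assume e: "e \<in> Idem" and f: "f \<in> Idem"
  show "e \<cdot> f = f \<longleftrightarrow> c e \<cdot> c f = c e"
    using c_reverses_order[of "c f" "c e"] e f by simp
  show "c e \<cdot> f = f \<longleftrightarrow> (\<forall>g\<in>Idem. f \<cdot> g = g \<and> g \<cdot> e = g \<longrightarrow> g = \<theta>)"
    using c_orthogonal[of f e] c_reverses_order[of "c f" e] e f by auto
qed simp_all

lemma mult_Idem_in_theta_ideal_iff_c: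
  "e \<in> Idem \<Longrightarrow> f \<in> Idem \<Longrightarrow> e \<cdot> f \<in> theta_ideal \<longleftrightarrow> e \<cdot> c f = e"
  using mult_Idem_in_theta_ideal_iff_M c_orthogonal by simp

lemma mult_in_theta_ideal_iff:
  assumes x: "x \<in> S" and f: "f \<in> Idem"
  shows "x \<cdot> f \<in> theta_ideal \<longleftrightarrow> x \<cdot> c f = x"
proof -
  obtain y where y: "y \<in> S" "x \<cdot> (y \<cdot> x) = x"
    using obtain_inverse x by blast
  have "x \<cdot> f \<in> theta_ideal \<longleftrightarrow> y \<cdot> x \<cdot> f \<in> theta_ideal"
    using theta_ideal_mult_inverse_left[OF x y, of f] x y f by simp
  also have "\<dots> \<longleftrightarrow> y \<cdot> x \<cdot> c f = y \<cdot> x"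
    using mult_Idem_in_theta_ideal_iff_c inverse_left_Idem[OF x y] f by blast
  also have "\<dots> \<longleftrightarrow> x \<cdot> c f = x"
  proof
    assume "y \<cdot> x \<cdot> c f = y \<cdot> x"
    then have "x \<cdot> (y \<cdot> (x \<cdot> c f)) = x \<cdot> (y \<cdot> x)"
      using x y f by simp
    then show "x \<cdot> c f = x"
      using inverse_mult_cancel[OF x y, of "c f"] y f by simp
  qed (use x y f in simp)
  finally show ?thesis .
qed

lemma theta_cong_mult_eq_left:
  assumes e: "e \<in> Idem" and f: "f \<in> Idem" and cong: "theta_cong (e \<cdot> f) e"
  shows "e \<cdot> f = e"
proof -
  have "f \<cdot> c f \<in> theta_ideal"
    using mult_Idem_in_theta_ideal_iff_c[of f "c f"] f by simp
  then have "e \<cdot> (e \<cdot> f \<cdot> c f) \<in> theta_ideal"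
    using theta_ideal_mult_left[of "f \<cdot> c f" e] e f by simp
  then have "e \<cdot> (e \<cdot> c f) \<in> theta_ideal"
    using cong e f unfolding theta_cong_def by (metis Idem_in c_Idem mult_closed)
  then show ?thesis
    using mult_Idem_in_theta_ideal_iff_c[of e "c f"] e f by simp
qed

lemma theta_cong_mult_eq_right:
  "e \<in> Idem \<Longrightarrow> f \<in> Idem \<Longrightarrow> theta_cong (e \<cdot> f) f \<Longrightarrow> e \<cdot> f = f"
  using regular_semigroup_with_complement.theta_cong_mult_eq_left[OF opposite_complement, of f e]
  by (simp add: Idem_opposite theta_cong_opposite)

lemma theta_cong_Idem_eq:
  assumes e: "e \<in> Idem" and f: "f \<in> Idem" and cong: "theta_cong e f"
  shows "e = f"
proof -
  have "theta_cong (e \<cdot> f) e"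
    using theta_cong_sym[OF theta_cong_mult_left[OF cong, of e]] e f by simp
  moreover have "theta_cong (e \<cdot> f) f"
    using theta_cong_mult_right[OF cong, of f] e f by simp
  ultimately show ?thesis
    using theta_cong_mult_eq_left theta_cong_mult_eq_right e f by metis
qed

lemma left_annihilator_eq_princ_left:
  assumes s: "s \<in> S" "y \<in> S" "s \<cdot> (y \<cdot> s) = s"
  shows "{x \<in> S. x \<cdot> s \<in> theta_ideal} = princ_left S (\<cdot>) (c (s \<cdot> y))"
proof -
  have Idem: "s \<cdot> y \<in> Idem"
    using inverse_right_Idem[OF s] .
  have "x \<cdot> s \<in> theta_ideal \<longleftrightarrow> x \<cdot> c (s \<cdot> y) = x" if "x \<in> S" for x
    using theta_ideal_mult_inverse_right[OF s that] mult_in_theta_ideal_iff[OF that Idem] s that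
    by simp
  then show ?thesis
    using princ_left_Idem[of "c (s \<cdot> y)"] Idem by auto
qed

lemma princ_left_eq_left_annihilator:
  assumes "f \<in> Idem"
  shows "princ_left S (\<cdot>) f = {x \<in> S. x \<cdot> c f \<in> theta_ideal}"
  using princ_left_Idem[OF assms] mult_in_theta_ideal_iff[of _ "c f"] assms by auto

lemma left_annihilators_eq_princ_left:
  "(\<lambda>s. {x \<in> S. x \<cdot> s \<in> theta_ideal}) ` S = princ_left S (\<cdot>) ` S"
proof (intro equalityI subsetI)
  fix X assume "X \<in> (\<lambda>s. {x \<in> S. x \<cdot> s \<in> theta_ideal}) ` S"
  then obtain s where s: "s \<in> S" "X = {x \<in> S. x \<cdot> s \<in> theta_ideal}"
    by blast
  obtain y where y: "y \<in> S" "s \<cdot> (y \<cdot> s) = s"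
    using obtain_inverse s(1) by blast
  have "c (s \<cdot> y) \<in> S"
    using inverse_right_Idem[OF s(1) y] by simp
  then show "X \<in> princ_left S (\<cdot>) ` S"
    using left_annihilator_eq_princ_left[OF s(1) y] s(2) by blast
next
  fix X assume "X \<in> princ_left S (\<cdot>) ` S"
  then obtain a where a: "a \<in> S" "X = princ_left S (\<cdot>) a"
    by blast
  obtain y where y: "y \<in> S" "a \<cdot> (y \<cdot> a) = a"
    using obtain_inverse a(1) by blast
  have Idem: "y \<cdot> a \<in> Idem"
    using inverse_left_Idem[OF a(1) y] .
  have "X = {x \<in> S. x \<cdot> c (y \<cdot> a) \<in> theta_ideal}"
    using a(2) princ_left_inverse[OF a(1) y] princ_left_eq_left_annihilator[OF Idem] by simp
  moreover have "c (y \<cdot> a) \<in> S"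
    using Idem by simp
  ultimately show "X \<in> (\<lambda>s. {x \<in> S. x \<cdot> s \<in> theta_ideal}) ` S"
    by blast
qed

lemma right_annihilators_eq_princ_right:
  "(\<lambda>s. {x \<in> S. s \<cdot> x \<in> theta_ideal}) ` S = princ_right S (\<cdot>) ` S"
  using regular_semigroup_with_complement.left_annihilators_eq_princ_left[OF opposite_complement]
  unfolding theta_ideal_opposite princ_right_eq_princ_left_flip .

end

locale theta_quotient = regular_semigroup_with_complement +
  fixes cls :: "'a \<Rightarrow> 'c"
  assumes cls_eq_iff: "x \<in> S \<Longrightarrow> y \<in> S \<Longrightarrow> cls x = cls y \<longleftrightarrow> theta_cong x y"
begin

sublocale congruence: semigroup_congruence_map S "(\<cdot>)" cls
proof
  show "semigroup_on S (\<cdot>)"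
    using regular unfolding regular_semigroup_on_def by blast
qed (simp_all add: cls_eq_iff theta_cong_mult_left theta_cong_mult_right)

abbreviation qmult :: "'c \<Rightarrow> 'c \<Rightarrow> 'c" where
  "qmult \<equiv> quot_mult S (\<cdot>) cls"

lemma cls_eq_cls_theta_iff: "x \<in> S \<Longrightarrow> cls x = cls \<theta> \<longleftrightarrow> x \<in> theta_ideal"
  by (simp add: cls_eq_iff theta_cong_theta_iff)

lemma quot_is_zero: "is_zero (cls ` S) qmult (cls \<theta>)"
proof -
  have "\<theta> \<cdot> x \<in> theta_ideal" "x \<cdot> \<theta> \<in> theta_ideal" if "x \<in> S" for x
    using theta_idealI[of \<theta> x] theta_idealI[of x \<theta>] that by simp_all
  then show ?thesis
    unfolding is_zero_def by (auto simp: cls_eq_cls_theta_iff)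
qed

theorem quot_strongly_regular_Baer: "strongly_regular_Baer (cls ` S) qmult"
proof -
  have "{x \<in> S. cls (x \<cdot> s) = cls \<theta>} = {x \<in> S. x \<cdot> s \<in> theta_ideal}"
    and "{x \<in> S. cls (s \<cdot> x) = cls \<theta>} = {x \<in> S. s \<cdot> x \<in> theta_ideal}" if "s \<in> S" for s
    using that by (auto simp: cls_eq_cls_theta_iff)
  then have left: "(\<lambda>s. {x \<in> S. cls (x \<cdot> s) = cls \<theta>}) ` S = princ_left S (\<cdot>) ` S"
    and right: "(\<lambda>s. {x \<in> S. cls (s \<cdot> x) = cls \<theta>}) ` S = princ_right S (\<cdot>) ` S"
    using left_annihilators_eq_princ_left right_annihilators_eq_princ_right
    by (simp_all cong: image_cong)
  show ?thesis
    unfolding strongly_regular_Baer_def Setcompr_eq_image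
  proof (intro conjI exI[of _ "cls \<theta>"])
    show "left_ann (cls ` S) qmult (cls \<theta>) ` cls ` S = princ_left (cls ` S) qmult ` cls ` S"
      by (rule congruence.quot_left_ann_eq_princ_left[OF theta_in left])
    show "right_ann (cls ` S) qmult (cls \<theta>) ` cls ` S = princ_right (cls ` S) qmult ` cls ` S"
      by (rule congruence.quot_right_ann_eq_princ_right[OF theta_in right])
  qed (fact congruence.quot_semigroup quot_is_zero)+
qed

lemma quot_idems_eq_Idem: "idems (cls ` S) qmult = cls ` Idem"
  unfolding congruence.quot_idems
proof (intro equalityI subsetI)
  fix A assume "A \<in> cls ` {x \<in> S. cls (x \<cdot> x) = cls x}"
  then obtain x where x: "x \<in> S" "theta_cong (x \<cdot> x) x" "A = cls x"
    by (auto simp: cls_eq_iff)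
  then obtain e where e: "e \<in> Idem" "theta_cong e x"
    using theta_cong_square_imp_Idem by blast
  then have "A = cls e"
    using x by (simp add: cls_eq_iff theta_cong_sym)
  with e show "A \<in> cls ` Idem"
    by blast
next
  fix A assume "A \<in> cls ` Idem"
  then show "A \<in> cls ` {x \<in> S. cls (x \<cdot> x) = cls x}"
    by auto
qed

lemma inj_on_cls_Idem: "inj_on cls Idem"
  using theta_cong_Idem_eq by (auto simp: inj_on_def cls_eq_iff)

lemma cls_mult_Idem_eq_iff:
  assumes "e \<in> Idem" "f \<in> Idem"
  shows "cls (e \<cdot> f) = cls e \<longleftrightarrow> e \<cdot> f = e" and "cls (e \<cdot> f) = cls f \<longleftrightarrow> e \<cdot> f = f"
  using assms theta_cong_mult_eq_left theta_cong_mult_eq_right by (auto simp: cls_eq_iff)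

lemma quot_bos_prod:
  assumes e: "e \<in> Idem" and f: "f \<in> Idem"
  shows "bos_prod (cls ` S) qmult (cls e) (cls f) = map_option cls (bos_prod S (\<cdot>) e f)"
proof -
  have meets: "{a, b} \<inter> {u, v} \<noteq> {} \<longleftrightarrow> a = u \<or> a = v \<or> b = u \<or> b = v" for a b u v :: 'x
    by auto
  have "{qmult (cls e) (cls f), qmult (cls f) (cls e)} \<inter> {cls e, cls f} \<noteq> {}
    \<longleftrightarrow> {e \<cdot> f, f \<cdot> e} \<inter> {e, f} \<noteq> {}"
    unfolding meets using cls_mult_Idem_eq_iff[OF e f] cls_mult_Idem_eq_iff[OF f e] e f by simp
  moreover have "cls e \<in> idems (cls ` S) qmult" "cls f \<in> idems (cls ` S) qmult"
    using e f by (simp_all add: quot_idems_eq_Idem)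
  ultimately show ?thesis
    unfolding bos_prod_def using e f by simp
qed

lemma quot_iso_to_bos:
  assumes "iso_to_bos E p S (\<cdot>) \<phi>"
  shows "iso_to_bos E p (cls ` S) qmult (cls \<circ> \<phi>)"
proof (rule iso_to_bos_comp[OF assms])
  show "bij_betw cls Idem (idems (cls ` S) qmult)"
    unfolding quot_idems_eq_Idem using inj_on_cls_Idem by (rule inj_on_imp_bij_betw)
qed (fact quot_bos_prod)

end

lemma iso_to_bos_Some_iff:
  assumes pa: "partial_algebra E p" and iso: "iso_to_bos E p S m \<phi>"
    and "\<alpha> \<in> E" "\<beta> \<in> E" "\<gamma> = \<alpha> \<or> \<gamma> = \<beta>"
  shows "p \<alpha> \<beta> = Some \<gamma> \<longleftrightarrow> m (\<phi> \<alpha>) (\<phi> \<beta>) = \<phi> \<gamma>"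
proof -
  have \<phi>: "bij_betw \<phi> E (idems S m)"
    and hom: "map_option \<phi> (p \<alpha> \<beta>) = bos_prod S m (\<phi> \<alpha>) (\<phi> \<beta>)"
    using iso assms(3,4) unfolding iso_to_bos_def by blast+
  have Idem: "\<phi> \<alpha> \<in> idems S m" "\<phi> \<beta> \<in> idems S m"
    using \<phi> assms(3,4) by (simp_all add: bij_betw_apply)
  show ?thesis
  proof
    assume "p \<alpha> \<beta> = Some \<gamma>"
    then show "m (\<phi> \<alpha>) (\<phi> \<beta>) = \<phi> \<gamma>"
      using hom unfolding bos_prod_def by (auto split: if_splits)
  next
    assume prod: "m (\<phi> \<alpha>) (\<phi> \<beta>) = \<phi> \<gamma>"
    then have "map_option \<phi> (p \<alpha> \<beta>) = Some (\<phi> \<gamma>)"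
      using hom Idem assms(5) unfolding bos_prod_def by auto
    then obtain \<delta> where \<delta>: "p \<alpha> \<beta> = Some \<delta>" "\<phi> \<delta> = \<phi> \<gamma>"
      by blast
    then have "\<delta> \<in> E"
      using pa unfolding partial_algebra_def by blast
    then show "p \<alpha> \<beta> = Some \<gamma>"
      using \<delta> \<phi> assms(3-5) unfolding bij_betw_def inj_on_def by auto
  qed
qed

lemma omega_l_iff_mult:
  assumes "partial_algebra E p" "iso_to_bos E p S m \<phi>" "\<alpha> \<in> E" "\<beta> \<in> E"
  shows "omega_l p \<alpha> \<beta> \<longleftrightarrow> m (\<phi> \<alpha>) (\<phi> \<beta>) = \<phi> \<alpha>"
  unfolding omega_l_def using iso_to_bos_Some_iff[OF assms] by blast

lemma omega_r_iff_mult: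
  assumes "partial_algebra E p" "iso_to_bos E p S m \<phi>" "\<alpha> \<in> E" "\<beta> \<in> E"
  shows "omega_r p \<alpha> \<beta> \<longleftrightarrow> m (\<phi> \<beta>) (\<phi> \<alpha>) = \<phi> \<alpha>"
  unfolding omega_r_def using iso_to_bos_Some_iff[OF assms(1,2,4,3)] by blast

lemma Mset_eq_singleton_iff:
  assumes pa: "partial_algebra E p" and iso: "iso_to_bos E p S m \<phi>"
    and z: "z \<in> E" "\<forall>e\<in>E. omega p z e" and \<alpha>\<beta>: "\<alpha> \<in> E" "\<beta> \<in> E"
  shows "Mset E p \<alpha> \<beta> = {z} \<longleftrightarrow>
    (\<forall>g\<in>idems S m. m g (\<phi> \<alpha>) = g \<and> m (\<phi> \<beta>) g = g \<longrightarrow> g = \<phi> z)"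
proof -
  have \<phi>: "bij_betw \<phi> E (idems S m)"
    using iso unfolding iso_to_bos_def by blast
  have M: "Mset E p \<alpha> \<beta> = {\<gamma> \<in> E. m (\<phi> \<gamma>) (\<phi> \<alpha>) = \<phi> \<gamma> \<and> m (\<phi> \<beta>) (\<phi> \<gamma>) = \<phi> \<gamma>}"
    unfolding Mset_def using omega_l_iff_mult[OF pa iso] omega_r_iff_mult[OF pa iso] \<alpha>\<beta> by blast
  have "z \<in> Mset E p \<alpha> \<beta>"
    using z \<alpha>\<beta> unfolding Mset_def omega_def by blast
  then have "Mset E p \<alpha> \<beta> = {z} \<longleftrightarrow> (\<forall>\<gamma>\<in>Mset E p \<alpha> \<beta>. \<gamma> = z)"
    by blast
  also have "\<dots> \<longleftrightarrow>
      (\<forall>\<gamma>\<in>E. m (\<phi> \<gamma>) (\<phi> \<alpha>) = \<phi> \<gamma> \<and> m (\<phi> \<beta>) (\<phi> \<gamma>) = \<phi> \<gamma> \<longrightarrow> \<phi> \<gamma> = \<phi> z)"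
    unfolding M using inj_on_eq_iff[OF bij_betw_imp_inj_on[OF \<phi>] _ z(1)] by auto
  also have "\<dots> \<longleftrightarrow> (\<forall>g\<in>idems S m. m g (\<phi> \<alpha>) = g \<and> m (\<phi> \<beta>) g = g \<longrightarrow> g = \<phi> z)"
    unfolding bij_betw_imp_surj_on[OF \<phi>, symmetric] by simp
  finally show ?thesis .
qed

lemma complement_from_biordered_set:
  assumes pa: "partial_algebra E p" and reg: "regular_semigroup_on S m"
    and iso: "iso_to_bos E p S m \<phi>"
    and z: "z \<in> E" "\<forall>e\<in>E. omega p z e"
    and c: "\<forall>e\<in>E. c e \<in> E" "\<forall>e\<in>E. c (c e) = e"
      "\<forall>e\<in>E. \<forall>f\<in>E. omega_l p f e \<longleftrightarrow> omega_r p (c e) (c f)"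
      "\<forall>e\<in>E. \<forall>f\<in>E. omega_l p f (c e) \<longleftrightarrow> Mset E p f e = {z}"
  shows "regular_semigroup_with_complement S m (\<phi> z) (\<lambda>e. \<phi> (c (inv_into E \<phi> e)))"
proof -
  interpret regular_semigroup S m
    using reg by unfold_locales
  have \<phi>: "bij_betw \<phi> E Idem"
    using iso unfolding iso_to_bos_def by blast
  have \<phi>_Idem: "\<phi> \<alpha> \<in> Idem" if "\<alpha> \<in> E" for \<alpha>
    using \<phi> that by (rule bij_betw_apply)
  have inv_\<phi>: "inv_into E \<phi> (\<phi> \<alpha>) = \<alpha>" if "\<alpha> \<in> E" for \<alpha>
    using \<phi> that by (rule bij_betw_inv_into_left)
  have Idem_cases: "\<exists>\<alpha>\<in>E. e = \<phi> \<alpha>" if "e \<in> Idem" for e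
    using \<phi> that unfolding bij_betw_def by blast
  note omega_l = omega_l_iff_mult[OF pa iso] and omega_r = omega_r_iff_mult[OF pa iso]
  show ?thesis
  proof unfold_locales
    show "\<phi> z \<in> Idem"
      using \<phi>_Idem z(1) .
  next
    fix e assume "e \<in> Idem"
    then obtain \<alpha> where "\<alpha> \<in> E" "e = \<phi> \<alpha>"
      using Idem_cases by blast
    then show "m (\<phi> z) e = \<phi> z \<and> m e (\<phi> z) = \<phi> z"
      using z omega_l omega_r unfolding omega_def by blast
  next
    fix e assume "e \<in> Idem"
    then obtain \<alpha> where "\<alpha> \<in> E" "e = \<phi> \<alpha>"
      using Idem_cases by blast
    then show "\<phi> (c (inv_into E \<phi> e)) \<in> Idem"
      and "\<phi> (c (inv_into E \<phi> (\<phi> (c (inv_into E \<phi> e))))) = e"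
      using c(1,2) \<phi>_Idem inv_\<phi> by simp_all
  next
    fix e f assume "e \<in> Idem" "f \<in> Idem"
    then obtain \<alpha> \<beta> where \<alpha>\<beta>: "\<alpha> \<in> E" "e = \<phi> \<alpha>" "\<beta> \<in> E" "f = \<phi> \<beta>"
      using Idem_cases by metis
    show "m f e = f \<longleftrightarrow> m (\<phi> (c (inv_into E \<phi> f))) (\<phi> (c (inv_into E \<phi> e))) = \<phi> (c (inv_into E \<phi> e))"
      using c(1,3) \<alpha>\<beta> by (simp add: inv_\<phi> omega_l omega_r)
    show "m f (\<phi> (c (inv_into E \<phi> e))) = f \<longleftrightarrow> (\<forall>g\<in>Idem. m g f = g \<and> m e g = g \<longrightarrow> g = \<phi> z)"
      using c(1,4) \<alpha>\<beta> Mset_eq_singleton_iff[OF pa iso z, of \<beta> \<alpha>] by (simp add: inv_\<phi> omega_l)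
  qed
qed

theorem theorem3p1:
  fixes E :: "'a set" and p :: "'a \<Rightarrow> 'a \<Rightarrow> 'a option"
    and S0 :: "'b set" and m0 :: "'b \<Rightarrow> 'b \<Rightarrow> 'b"
  assumes regular: "is_bos_of_regular E p S0 m0"
    and E1: "z \<in> E" "\<forall>e\<in>E. omega p z e"
    and E2: "\<forall>e\<in>E. c e \<in> E"
      "\<forall>e\<in>E. c (c e) = e"
      "\<forall>e\<in>E. \<forall>f\<in>E. omega_l p f e \<longleftrightarrow> omega_r p (c e) (c f)"
      "\<forall>e\<in>E. \<forall>f\<in>E. omega_l p f (c e) \<longleftrightarrow> Mset E p f e = {z}"
  shows "\<exists>(S :: ('a \<times> 'a) set set) m \<phi>.
           strongly_regular_Baer S m \<and> iso_to_bos E p S m \<phi>"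
proof -
  from regular obtain \<phi> where pa: "partial_algebra E p" and reg: "regular_semigroup_on S0 m0"
    and iso: "iso_to_bos E p S0 m0 \<phi>"
    unfolding is_bos_of_regular_def by blast
  interpret regular_semigroup_with_complement S0 m0 "\<phi> z" "\<lambda>e. \<phi> (c (inv_into E \<phi> e))"
    using complement_from_biordered_set[OF pa reg iso E1 E2] .
  \<comment> \<open>the class of \<open>x\<close> is encoded as the set of pairs \<open>(\<alpha>, \<beta>)\<close> with \<open>\<phi>\<alpha> x \<phi>\<beta> \<in> J\<close>,
    which has the carrier type the statement asks for\<close>
  define cls where "cls x = {(\<alpha>, \<beta>) \<in> E \<times> E. m0 (\<phi> \<alpha>) (m0 x (\<phi> \<beta>)) \<in> theta_ideal}" for x
  have "\<phi> ` E = Idem"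
    using iso unfolding iso_to_bos_def bij_betw_def by blast
  then interpret theta_quotient S0 m0 "\<phi> z" "\<lambda>e. \<phi> (c (inv_into E \<phi> e))" cls
    by unfold_locales (simp only: cls_def Idem_sandwich_eq_iff)
  show ?thesis
    using quot_strongly_regular_Baer quot_iso_to_bos[OF iso] by blast
qed

end
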